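(* Let $(K,C,S)$ be the associated layered complex of a divided complex $(K,S^0)$, and let $(K,C,S)\searrow(K-\{f,p\},C,S)$ be an elementary intermediate collapse of a principal simplex $p\in\mathrm{IM}(K,C,S)$ using the free face $f$. Then the freely orthogonal deformation retraction $H:|K|\times I\to|K|$ associated to $p$ and $f$ satisfies $H_t(|K|-|S|)\subseteq|K|-|S|$ and $H_t(|S|)\subseteq|S|$ for all $t\in I$.
   Context: A simplicial complex is a set of finite nonempty sets (simplices) closed under passing to nonempty subsets (faces); $K^0$ is its vertex set; $t<s$ means proper face; $|K|$ is the geometric realization and $|s|$ the closed geometric simplex. A simplex is principal in $K$ if it is not a proper face of any simplex of $K$; $f$ is free in $K$ if it is a proper face of a principal simplex $p$ and of no other simplex of $K$. A layered simplicial complex is $(K,C,S)$ with $C,S$ disjoint subcomplexes; $\mathrm{IM}(K,C,S)$ are the simplices in neither $C$ nor $S$. A divided complex is $(K,S^0)$, $S^0\subseteq K^0$; its associated layered complex has $S$ = simplices with all vertices in $S^0$, $C$ = simplices with all vertices in $K^0-S^0$. An elementary intermediate collapse removes $f,p$ where (i) $p\in\mathrm{IM}(K,C,S)$, (ii) $p$ is principal in $K$, (iii) $f$ is a face of $p$ free in $K$, (iv) every $t\in S$ with $t<p$ satisfies $t<f$. Freely orthogonal deformation retraction: with $v$ the vertex of $p$ not in $f$ and $f_1,\dots,f_m$ the vertices of $f$ ($m\ge1$), identify $|p|$ with $\{x\in\mathbb R^m:x_i\ge0,\sum x_i\le1\}$ ($v\mapsto0$, $f_i\mapsto e_i$); set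 $r(x)=(x_1-x_j,\dots,x_m-x_j)$ with $x_j=\min_i x_i$, and $H(x,t)=(1-t)x+t\,r(x)$ for $x\in|p|$, $H(x,t)=x$ for $x\in|K|-|p|$; $H_t=H(\cdot,t)$. *)

theory Defs
  imports Main "HOL-Analysis.Analysis"
begin

definition simplicial_complex :: "'v set set \<Rightarrow> bool" where
  "simplicial_complex K \<longleftrightarrow>
     (\<forall>s\<in>K. finite s \<and> s \<noteq> {}) \<and>
     (\<forall>s\<in>K. \<forall>t. t \<subseteq> s \<and> t \<noteq> {} \<longrightarrow> t \<in> K)"

definition vertices :: "'v set set \<Rightarrow> 'v set" where
  "vertices K = \<Union>K"

definition subcomplex :: "'v set set \<Rightarrow> 'v set set \<Rightarrow> bool" where
  "subcomplex L K \<longleftrightarrow> L \<subseteq> K \<and> simplicial_complex L"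

definition principal :: "'v set set \<Rightarrow> 'v set \<Rightarrow> bool" where
  "principal K p \<longleftrightarrow> p \<in> K \<and> \<not> (\<exists>s\<in>K. p \<subset> s)"

definition free_face :: "'v set set \<Rightarrow> 'v set \<Rightarrow> 'v set \<Rightarrow> bool" where
  "free_face K f p \<longleftrightarrow> f \<in> K \<and> principal K p \<and> f \<subset> p \<and> (\<forall>s\<in>K. f \<subset> s \<longrightarrow> s = p)"

definition layered_complex :: "'v set set \<Rightarrow> 'v set set \<Rightarrow> 'v set set \<Rightarrow> bool" where
  "layered_complex K C S \<longleftrightarrow> simplicial_complex K \<and> subcomplex C K \<and> subcomplex S K \<and> C \<inter> S = {}"

definition IM :: "'v set set \<Rightarrow> 'v set set \<Rightarrow> 'v set set \<Rightarrow> 'v set set" where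
  "IM K C S = K - C - S"

definition divided_complex :: "'v set set \<Rightarrow> 'v set \<Rightarrow> bool" where
  "divided_complex K S0 \<longleftrightarrow> simplicial_complex K \<and> S0 \<subseteq> vertices K"

definition assoc_S :: "'v set set \<Rightarrow> 'v set \<Rightarrow> 'v set set" where
  "assoc_S K S0 = {s\<in>K. s \<subseteq> S0}"

definition assoc_C :: "'v set set \<Rightarrow> 'v set \<Rightarrow> 'v set set" where
  "assoc_C K S0 = {s\<in>K. s \<subseteq> vertices K - S0}"

definition elementary_intermediate_collapse ::
  "'v set set \<Rightarrow> 'v set set \<Rightarrow> 'v set set \<Rightarrow> 'v set \<Rightarrow> 'v set \<Rightarrow> bool" where
  "elementary_intermediate_collapse K C S f p \<longleftrightarrow>
     layered_complex K C S \<and>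
     p \<in> IM K C S \<and>
     principal K p \<and>
     free_face K f p \<and>
     (\<forall>t\<in>S. t \<subset> p \<longrightarrow> t \<subset> f)"

text \<open>A point of the realization is a function from vertices to reals (barycentric coordinates).
  The closed geometric simplex |s|:\<close>
definition geom_simplex :: "'v set \<Rightarrow> ('v \<Rightarrow> real) set" where
  "geom_simplex s = {x. (\<forall>v. 0 \<le> x v) \<and> (\<forall>v. v \<notin> s \<longrightarrow> x v = 0) \<and> sum x s = 1}"

definition geom_real :: "'v set set \<Rightarrow> ('v \<Rightarrow> real) set" where
  "geom_real K = (\<Union>s\<in>K. geom_simplex s)"

definition apex :: "'v set \<Rightarrow> 'v set \<Rightarrow> 'v" where
  "apex p f = (THE v. v \<in> p - f)"

text \<open>Identification of |p| with the standard simplex in R^f (coordinates indexed by the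
  vertices f_i of f; the apex v goes to 0, f_i to e_i): the coordinates of x are x restricted
  to f; the inverse sends y to the point with barycentric coordinate y w at w in f and
  1 - sum of y over f at the apex.\<close>
definition coords_to_point :: "'v set \<Rightarrow> 'v set \<Rightarrow> ('v \<Rightarrow> real) \<Rightarrow> ('v \<Rightarrow> real)" where
  "coords_to_point p f y =
     (\<lambda>w. if w \<in> f then y w else if w = apex p f then 1 - sum y f else 0)"

definition retr_r :: "'v set \<Rightarrow> ('v \<Rightarrow> real) \<Rightarrow> ('v \<Rightarrow> real)" where
  "retr_r f y = (\<lambda>w. y w - Min (y ` f))"

definition fodr :: "'v set \<Rightarrow> 'v set \<Rightarrow> real \<Rightarrow> ('v \<Rightarrow> real) \<Rightarrow> ('v \<Rightarrow> real)" where
  "fodr p f t x =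
     (if x \<in> geom_simplex p
      then coords_to_point p f (\<lambda>w. (1 - t) * x w + t * retr_r f x w)
      else x)"

end

theory Submission
  imports Defs
begin

text \<open>
  A point x of |p| lies in |S| exactly when its support lies in S. Because every simplex of S
  below p is below f, such a support is a proper face of f: x has apex coordinate 0 and some
  vanishing coordinate on f, so the minimum of x over f is 0 and H fixes x. Conversely, H only
  moves mass from f to the apex, so the apex coordinate of H_t x vanishes only if H_t x = x.
  Hence H_t preserves |p| together with both |p| \<inter> |S| and its complement, and it is the
  identity off |p|.
\<close>

lemma apex_insert:
  assumes "v \<notin> f"
  shows "apex (insert v f) f = v"
  unfolding apex_def using assms by (intro the_equality) auto

lemma simplicial_complex_face:
  assumes "simplicial_complex K" "s \<in> K" "t \<subseteq> s" "t \<noteq> {}"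
  shows "t \<in> K"
  using assms unfolding simplicial_complex_def by blast

definition bary_support :: "('v \<Rightarrow> real) \<Rightarrow> 'v set" where
  "bary_support x = {w. x w \<noteq> 0}"

lemma bary_support_subset:
  assumes "x \<in> geom_simplex s"
  shows "bary_support x \<subseteq> s"
  using assms by (auto simp: geom_simplex_def bary_support_def)

lemma bary_support_nonempty:
  assumes "x \<in> geom_simplex s"
  shows "bary_support x \<noteq> {}"
proof
  assume "bary_support x = {}"
  then have "x = (\<lambda>_. 0)" by (auto simp: bary_support_def)
  then show False using assms by (simp add: geom_simplex_def)
qed

lemma geom_simplex_bary_support:
  assumes "finite s" "x \<in> geom_simplex s"
  shows "x \<in> geom_simplex (bary_support x)"
proof -
  have "sum x (bary_support x) = sum x s"
    using assms bary_support_subset[OF assms(2)]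
    by (intro sum.mono_neutral_left) (auto simp: bary_support_def)
  then show ?thesis using assms(2) by (auto simp: geom_simplex_def bary_support_def)
qed

lemma mem_geom_real_iff_bary_support:
  assumes "simplicial_complex L" "finite s" "x \<in> geom_simplex s"
  shows "x \<in> geom_real L \<longleftrightarrow> bary_support x \<in> L"
proof
  assume "x \<in> geom_real L"
  then obtain s' where s': "s' \<in> L" "x \<in> geom_simplex s'"
    by (auto simp: geom_real_def)
  have "bary_support x \<subseteq> s'" "bary_support x \<noteq> {}"
    using bary_support_subset[OF s'(2)] bary_support_nonempty[OF s'(2)] .
  then show "bary_support x \<in> L"
    by (rule simplicial_complex_face[OF assms(1) s'(1)])
next
  assume "bary_support x \<in> L"
  then show "x \<in> geom_real L"
    using geom_simplex_bary_support[OF assms(2,3)] by (auto simp: geom_real_def)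
qed

lemma free_face_eq_insert_apex:
  assumes "simplicial_complex K" "free_face K f p"
  shows "apex p f \<notin> f" "p = insert (apex p f) f"
proof -
  have "p \<in> K" "f \<subset> p" and only_coface: "\<forall>s\<in>K. f \<subset> s \<longrightarrow> s = p"
    using assms(2) by (simp_all add: free_face_def principal_def)
  then obtain v where v: "v \<in> p" "v \<notin> f"
    by (meson psubset_imp_ex_mem DiffE)
  have "insert v f \<in> K"
    using \<open>f \<subset> p\<close> v by (intro simplicial_complex_face[OF assms(1) \<open>p \<in> K\<close>]) auto
  moreover have "f \<subset> insert v f"
    using v(2) by auto
  ultimately have p: "p = insert v f"
    using only_coface by simp
  then show "apex p f \<notin> f" "p = insert (apex p f) f"
    using v(2) apex_insert[OF v(2)] by simp_all
qed

lemma fodr_geom_simplex_eq: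
  assumes "finite f" "v \<notin> f" "x \<in> geom_simplex (insert v f)"
  shows "fodr (insert v f) f t x =
           (\<lambda>w. if w \<in> f then x w - t * Min (x ` f)
                else if w = v then x v + t * Min (x ` f) * card f else 0)"
proof -
  have "1 - sum x f = x v"
    using assms by (simp add: geom_simplex_def)
  moreover have "sum (\<lambda>w. (1 - t) * x w + t * retr_r f x w) f = sum x f - t * Min (x ` f) * card f"
    by (simp add: retr_r_def algebra_simps sum.distrib sum_subtractf sum_distrib_left)
  ultimately show ?thesis
    using assms(3)
    by (auto simp: fodr_def coords_to_point_def retr_r_def apex_insert[OF assms(2)]
        algebra_simps fun_eq_iff)
qed

lemma Min_image_nonneg:
  assumes "finite f" "f \<noteq> {}" "x \<in> geom_simplex s"
  shows "0 \<le> Min (x ` f)"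
  using assms by (auto simp: geom_simplex_def)

lemma fodr_mem_geom_simplex:
  assumes "finite f" "f \<noteq> {}" "v \<notin> f" "x \<in> geom_simplex (insert v f)" "t \<in> {0..1}"
  shows "fodr (insert v f) f t x \<in> geom_simplex (insert v f)"
proof -
  let ?m = "Min (x ` f)"
  have m: "0 \<le> ?m" by (rule Min_image_nonneg[OF assms(1,2,4)])
  have "t * ?m \<le> ?m"
    using m assms(5) by (simp add: mult_left_le_one_le)
  then have on_f: "0 \<le> x w - t * ?m" if "w \<in> f" for w
    using that assms(1) by (meson Min_le diff_ge_0_iff_ge finite_imageI image_eqI order_trans)
  have "0 \<le> x v" "t * ?m * card f \<ge> 0"
    using assms(4,5) m by (auto simp: geom_simplex_def)
  then have at_apex: "0 \<le> x v + t * ?m * card f" by linarith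
  have "sum (\<lambda>w. x w - t * ?m) f + (x v + t * ?m * card f) = sum x (insert v f)"
    using assms(1,3) by (simp add: sum_subtractf)
  also have "\<dots> = 1"
    using assms(4) by (simp add: geom_simplex_def)
  finally have "sum (fodr (insert v f) f t x) (insert v f) = 1"
    using assms(1,3) by (simp add: fodr_geom_simplex_eq[OF assms(1,3,4)] add.commute)
  then show ?thesis
    using on_f at_apex by (auto simp: geom_simplex_def fodr_geom_simplex_eq[OF assms(1,3,4)])
qed

lemma fodr_fixes_if_bary_support_psubset:
  assumes "finite f" "v \<notin> f" "x \<in> geom_simplex (insert v f)" "bary_support x \<subset> f"
  shows "fodr (insert v f) f t x = x"
proof -
  obtain u where u: "u \<in> f" "x u = 0"
    using assms(4) by (auto simp: bary_support_def)
  then have "Min (x ` f) = 0"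
    using assms(1,3) Min_image_nonneg[OF assms(1) _ assms(3)]
    by (metis Min_le antisym empty_iff finite_imageI image_eqI)
  moreover have "x w = 0" if "w \<notin> f" for w
    using that assms(4) by (auto simp: bary_support_def)
  ultimately show ?thesis
    by (auto simp: fodr_geom_simplex_eq[OF assms(1-3)] fun_eq_iff)
qed

lemma fodr_fixes_if_apex_coord_zero:
  assumes "finite f" "f \<noteq> {}" "v \<notin> f" "x \<in> geom_simplex (insert v f)" "0 \<le> t"
    and "fodr (insert v f) f t x v = 0"
  shows "fodr (insert v f) f t x = x"
proof -
  let ?m = "Min (x ` f)"
  have "x v + t * ?m * card f = 0"
    using assms(6) by (simp add: fodr_geom_simplex_eq[OF assms(1,3,4)] assms(3))
  moreover have "0 \<le> x v" "0 \<le> t * ?m"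
    using assms(4,5) Min_image_nonneg[OF assms(1,2,4)] by (auto simp: geom_simplex_def)
  moreover have "card f > 0"
    using assms(1,2) by (simp add: card_gt_0_iff)
  ultimately have "t * ?m * card f = 0" "x v = 0"
    by (auto simp: zero_less_mult_iff add_nonneg_eq_0_iff)
  then have "t * ?m = 0"
    using \<open>card f > 0\<close> by simp
  then show ?thesis
    using assms(4) \<open>x v = 0\<close>
    by (auto simp: fodr_geom_simplex_eq[OF assms(1,3,4)] fun_eq_iff geom_simplex_def)
qed

lemma elementary_intermediate_collapse_apex:
  assumes "elementary_intermediate_collapse K C S f p"
  shows "finite f" "f \<noteq> {}" "apex p f \<notin> f" "p = insert (apex p f) f"
proof -
  have K: "simplicial_complex K" and free: "free_face K f p"
    using assms by (auto simp: elementary_intermediate_collapse_def layered_complex_def)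
  then show "finite f" "f \<noteq> {}"
    by (auto simp: free_face_def simplicial_complex_def)
  show "apex p f \<notin> f" "p = insert (apex p f) f"
    using free_face_eq_insert_apex[OF K free] by auto
qed

lemma elementary_intermediate_collapse_fodr_mem_geom_simplex:
  assumes "elementary_intermediate_collapse K C S f p"
    and "x \<in> geom_simplex p" "t \<in> {0..1}"
  shows "fodr p f t x \<in> geom_simplex p"
  using fodr_mem_geom_simplex[OF elementary_intermediate_collapse_apex(1-3)[OF assms(1)]] assms(2,3)
    elementary_intermediate_collapse_apex(4)[OF assms(1)]
  by simp

lemma elementary_intermediate_collapse_bary_support_psubset:
  assumes "elementary_intermediate_collapse K C S f p"
    and "x \<in> geom_simplex p" "x \<in> geom_real S"
  shows "bary_support x \<subset> f"
proof -
  have S: "simplicial_complex S" and p: "p \<in> K" "p \<notin> S"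
    and below_p: "\<forall>t\<in>S. t \<subset> p \<longrightarrow> t \<subset> f"
    using assms(1)
    by (auto simp: elementary_intermediate_collapse_def layered_complex_def subcomplex_def IM_def)
  have "finite p"
    using elementary_intermediate_collapse_apex[OF assms(1)] by (metis finite_insert)
  then have "bary_support x \<in> S"
    using mem_geom_real_iff_bary_support[OF S _ assms(2)] assms(3) by blast
  moreover have "bary_support x \<subset> p"
    using bary_support_subset[OF assms(2)] calculation p(2) by blast
  ultimately show ?thesis
    using below_p by blast
qed

lemma elementary_intermediate_collapse_fodr_mem_geom_real_iff:
  assumes "elementary_intermediate_collapse K C S f p"
    and "x \<in> geom_simplex p" "t \<in> {0..1}"
  shows "fodr p f t x \<in> geom_real S \<longleftrightarrow> x \<in> geom_real S"
proof -
  note apex = elementary_intermediate_collapse_apex[OF assms(1)]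
  define v where "v = apex p f"
  have f: "finite f" "f \<noteq> {}" "v \<notin> f" and p: "p = insert v f"
    using apex by (auto simp: v_def)
  show ?thesis
  proof
    assume image_in_S: "fodr p f t x \<in> geom_real S"
    have "bary_support (fodr p f t x) \<subset> f"
      using elementary_intermediate_collapse_fodr_mem_geom_simplex[OF assms]
        elementary_intermediate_collapse_bary_support_psubset[OF assms(1) _ image_in_S]
      by blast
    then have "fodr p f t x v = 0"
      using f(3) by (auto simp: bary_support_def)
    then have "fodr p f t x = x"
      using fodr_fixes_if_apex_coord_zero[OF f] assms(2,3) p by simp
    then show "x \<in> geom_real S"
      using image_in_S by simp
  next
    assume "x \<in> geom_real S"
    then have "fodr p f t x = x"
      using fodr_fixes_if_bary_support_psubset[OF f(1,3)] assms(2) p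
        elementary_intermediate_collapse_bary_support_psubset[OF assms(1,2)]
      by simp
    then show "fodr p f t x \<in> geom_real S"
      using \<open>x \<in> geom_real S\<close> by simp
  qed
qed

theorem lemma5p5:
  fixes K :: "'v set set" and S0 :: "'v set" and f p :: "'v set"
  assumes "divided_complex K S0"
    and "elementary_intermediate_collapse K (assoc_C K S0) (assoc_S K S0) f p"
  shows "\<forall>t\<in>{0..1::real}.
           fodr p f t ` (geom_real K - geom_real (assoc_S K S0)) \<subseteq> geom_real K - geom_real (assoc_S K S0)
         \<and> fodr p f t ` geom_real (assoc_S K S0) \<subseteq> geom_real (assoc_S K S0)"
proof (intro ballI conjI image_subsetI)
  fix t :: real and x
  assume t: "t \<in> {0..1}"
  let ?S = "assoc_S K S0"
  note collapse = assms(2)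
  note S_iff = elementary_intermediate_collapse_fodr_mem_geom_real_iff[OF collapse _ t]
  have off_p: "fodr p f t x = x" if "x \<notin> geom_simplex p"
    using that by (simp add: fodr_def)
  show "fodr p f t x \<in> geom_real ?S" if "x \<in> geom_real ?S"
    using that off_p S_iff by (cases "x \<in> geom_simplex p") simp_all
  show "fodr p f t x \<in> geom_real K - geom_real ?S" if "x \<in> geom_real K - geom_real ?S"
  proof (cases "x \<in> geom_simplex p")
    case True
    have "p \<in> K"
      using collapse by (simp add: elementary_intermediate_collapse_def IM_def)
    then have "fodr p f t x \<in> geom_real K"
      using elementary_intermediate_collapse_fodr_mem_geom_simplex[OF collapse True t]
      by (auto simp: geom_real_def)
    then show ?thesis
      using that S_iff[OF True] by simp
  next
    case False
    then show ?thesis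
      using that off_p by simp
  qed
qed

end
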